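(* Let $d\ge1$, $0<\mu\le L$, let $A\in\mathbb{R}^{d\times d}$ be symmetric with $\mu I\preceq A\preceq LI$, $b\in\mathbb{R}^d$, $f(x)=\frac12x^\top Ax+b^\top x$, and let $\{x_t\},\{G_t\}$ be generated by Sharpened-BFGS for quadratics from an arbitrary $x_0$, assuming $\nabla f(x_t)\neq0$ for all $t$ considered. Let $\theta_t:=\theta(A,G_t,x_{t+1}-x_t)$ and $\sigma_t:=\sigma(A,G_t)$. Then for all $t\ge0$, $$\sigma_{t+1}\le\left(1-\frac{\mu}{dL}\right)\left(\sigma_t-\theta_t^2\right),$$ and for all $t\ge1$, $$\sum_{i=0}^{t-1}\frac{\theta_i^2}{\left(1-\frac{\mu}{dL}\right)^i}\le\sigma_0.$$
   Context: For symmetric positive definite $A,G\in\mathbb{R}^{d\times d}$ and $u\in\mathbb{R}^d\setminus\{0\}$, the BFGS operator is $\mathrm{BFGS}(A,G,u):=G-\frac{Guu^\top G}{u^\top Gu}+\frac{Auu^\top A}{u^\top Au}$. The greedy vector is $\bar u(A,G):=\arg\max_{u\in\{e_1,\dots,e_d\}}\frac{u^\top Gu}{u^\top Au}$ (ties broken arbitrarily). Define $\theta(A,G,u):=\left(\frac{u^\top (G-A)A^{-1}(G-A)u}{u^\top GA^{-1}Gu}\right)^{1/2}$ and $\sigma(A,G):=\mathrm{Tr}(A^{-1}G)-d$. Sharpened-BFGS for quadratics: set $G_0=LI$; for $t=0,1,2,\dots$: $x_{t+1}=x_t-G_t^{-1}\nabla f(x_t)$, $s_t=x_{t+1}-x_t$,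 $\bar G_t=\mathrm{BFGS}(A,G_t,s_t)$, $\bar u=\bar u(A,\bar G_t)$, $G_{t+1}=\mathrm{BFGS}(A,\bar G_t,\bar u)$. *)

theory Defs
  imports "HOL-Analysis.Analysis"
begin

definition outer :: "real^'n \<Rightarrow> real^'n \<Rightarrow> real^'n^'n" where
  "outer a c = (\<chi> i j. a$i * c$j)"

definition BFGS :: "real^'n^'n \<Rightarrow> real^'n^'n \<Rightarrow> real^'n \<Rightarrow> real^'n^'n" where
  "BFGS A G u = G - (1 / (u \<bullet> (G *v u))) *\<^sub>R outer (G *v u) (u v* G)
                  + (1 / (u \<bullet> (A *v u))) *\<^sub>R outer (A *v u) (u v* A)"

definition is_greedy :: "real^'n^'n \<Rightarrow> real^'n^'n \<Rightarrow> real^'n \<Rightarrow> bool" where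
  "is_greedy A G u \<longleftrightarrow> (\<exists>i. u = axis i 1 \<and>
      (\<forall>j. (axis j 1 \<bullet> (G *v axis j 1)) / (axis j 1 \<bullet> (A *v axis j 1))
            \<le> (axis i 1 \<bullet> (G *v axis i 1)) / (axis i 1 \<bullet> (A *v axis i 1))))"

definition theta :: "real^'n^'n \<Rightarrow> real^'n^'n \<Rightarrow> real^'n \<Rightarrow> real" where
  "theta A G u = sqrt ((u \<bullet> (((G - A) ** matrix_inv A ** (G - A)) *v u))
                     / (u \<bullet> ((G ** matrix_inv A ** G) *v u)))"

definition sigma :: "real^'n^'n \<Rightarrow> real^'n^'n \<Rightarrow> real" where
  "sigma A G = trace (matrix_inv A ** G) - real CARD('n)"

definition quad_f :: "real^'n^'n \<Rightarrow> real^'n \<Rightarrow> real^'n \<Rightarrow> real" where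
  "quad_f A b x = (1/2) * (x \<bullet> (A *v x)) + b \<bullet> x"

definition grad :: "(real^'n \<Rightarrow> real) \<Rightarrow> real^'n \<Rightarrow> real^'n" where
  "grad f x = (THE D. GDERIV f x :> D)"

end

theory Submission
  imports Defs
begin

text \<open>
  Write \<open>R = G - A \<succeq> 0\<close>, so that \<open>\<sigma>(A,G) = tr(A\<^sup>-\<^sup>1R) \<ge> 0\<close> and, as \<open>\<mu>I \<preceq> A\<close>,
  \<open>\<mu>\<sigma>(A,G) \<le> tr R\<close>. Both BFGS updates preserve \<open>G \<succeq> A\<close>, and an update along \<open>u\<close>
  changes \<open>\<sigma>\<close> by \<open>1 - a/g\<close>, where \<open>a = u\<^sup>TGA\<^sup>-\<^sup>1Gu\<close>, \<open>g = u\<^sup>TGu\<close>, \<open>c = u\<^sup>TAu\<close>.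
  Since \<open>\<theta>\<^sup>2 = (a - 2g + c)/a\<close> and \<open>c \<le> g\<close>, the update along the step decreases \<open>\<sigma>\<close>
  by at least \<open>\<theta>\<^sup>2\<close>. For the greedy coordinate, \<open>G\<^sub>j\<^sub>j \<le> (g/c)A\<^sub>j\<^sub>j\<close> for all \<open>j\<close>, so
  \<open>\<mu>\<sigma> \<le> tr(G - A) \<le> (g/c - 1)dL \<le> (a/g - 1)dL\<close>, the last step being \<open>g\<^sup>2 \<le> ac\<close>, i.e.
  Cauchy--Schwarz in the \<open>A\<^sup>-\<^sup>1\<close>-inner product; this is the contraction by \<open>1 - \<mu>/(dL)\<close>.
  Unrolling the resulting recursion gives the weighted sum bound.
\<close>

section \<open>Matrices, outer products and positive semidefiniteness\<close>

lemma inner_matrix_sym: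
  fixes M :: "real^'n^'n"
  assumes "transpose M = M"
  shows "x \<bullet> (M *v y) = (M *v x) \<bullet> y"
  by (metis assms dot_lmul_matrix transpose_matrix_vector)

lemma inner_axis_matrix_axis: "axis j 1 \<bullet> ((M::real^'n^'n) *v axis i 1) = M$j$i"
  by (simp add: matrix_vector_mult_basis column_def inner_axis')

lemma symmetric_matrix_iff: "transpose (M::real^'n^'n) = M \<longleftrightarrow> (\<forall>i j. M$i$j = M$j$i)"
  by (auto simp: vec_eq_iff transpose_def)

lemma outer_nth: "outer a c $ j $ k = a$j * (c::real^'n)$k"
  by (simp add: outer_def)

lemma outer_mult_vector: "outer a c *v v = (c \<bullet> v) *\<^sub>R (a::real^'n)"
  by (simp add: vec_eq_iff outer_def matrix_vector_mult_def inner_vec_def sum_distrib_left mult_ac)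

lemma trace_matrix_mult_outer: "trace ((M::real^'n^'n) ** outer a c) = (M *v a) \<bullet> c"
  by (simp add: trace_def outer_def matrix_matrix_mult_def matrix_vector_mult_def inner_vec_def
      sum_distrib_left sum_distrib_right mult_ac)

lemma trace_matrix_mult_sum_list_outer:
  "trace ((M::real^'n^'n) ** sum_list (map (\<lambda>w. outer w w) ws)) = (\<Sum>w\<leftarrow>ws. (M *v w) \<bullet> w)"
proof (induction ws)
  case Nil
  then show ?case by (simp add: trace_def matrix_matrix_mult_def)
next
  case (Cons w ws)
  then show ?case by (simp add: matrix_add_ldistrib trace_add trace_matrix_mult_outer)
qed

lemma matrix_diff_ldistrib: "(M::real^'n^'n) ** (B - C) = M ** B - M ** C"
  by (simp add: matrix_matrix_mult_def vec_eq_iff sum_subtractf algebra_simps)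

lemma trace_scaleR: "trace (k *\<^sub>R (M::real^'n^'n)) = k * trace M"
  by (simp add: trace_def sum_distrib_left)

lemma quadratic_nonneg_imp_discriminant_le:
  fixes a p q :: real
  assumes "\<And>t. 0 \<le> a + 2*t*p + t^2*q" and "0 \<le> q"
  shows "p^2 \<le> a*q"
proof (cases "q = 0")
  case True
  show ?thesis
  proof (rule ccontr)
    assume "\<not> ?thesis"
    with True have "p \<noteq> 0" by simp
    have "0 \<le> a + 2*(-(a+1)/(2*p))*p + (-(a+1)/(2*p))^2*q" by (rule assms(1))
    also have "\<dots> = -1" using True \<open>p \<noteq> 0\<close> by (simp add: field_simps)
    finally show False by simp
  qed
next
  case False
  with assms(2) have q: "q > 0" by simp
  have "0 \<le> a + 2*(-p/q)*p + (-p/q)^2*q" by (rule assms(1))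
  also have "\<dots> = a - p^2/q" using q by (simp add: field_simps power2_eq_square)
  finally show ?thesis using q by (simp add: field_simps)
qed

definition psd :: "real^'n^'n \<Rightarrow> bool" where
  "psd R \<longleftrightarrow> (\<forall>v. 0 \<le> v \<bullet> (R *v v))"

lemma psd_Cauchy_Schwarz:
  fixes B :: "real^'n^'n"
  assumes sym: "transpose B = B" and psd: "psd B"
  shows "(x \<bullet> (B *v y))^2 \<le> (x \<bullet> (B *v x)) * (y \<bullet> (B *v y))"
proof (rule quadratic_nonneg_imp_discriminant_le)
  fix t
  have yx: "y \<bullet> (B *v x) = x \<bullet> (B *v y)"
    using inner_matrix_sym[OF sym] by (metis inner_commute)
  have "0 \<le> (x + t *\<^sub>R y) \<bullet> (B *v (x + t *\<^sub>R y))" using psd psd_def by blast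
  also have "\<dots> = x \<bullet> (B *v x) + 2*t*(x \<bullet> (B *v y)) + t^2*(y \<bullet> (B *v y))"
    by (simp add: yx power2_eq_square algebra_simps)
  finally show "0 \<le> x \<bullet> (B *v x) + 2*t*(x \<bullet> (B *v y)) + t^2*(y \<bullet> (B *v y))" .
qed (use psd psd_def in blast)

lemma psd_diag_nonneg: "psd (R::real^'n^'n) \<Longrightarrow> 0 \<le> R$i$i"
  by (metis inner_axis_matrix_axis psd_def)

lemma psd_zero_diag_imp_zero:
  assumes "transpose R = R" "psd (R::real^'n^'n)" "R$j$j = 0"
  shows "R$j$i = 0"
proof -
  have "(R$j$i)^2 \<le> R$j$j * R$i$i"
    using psd_Cauchy_Schwarz[OF assms(1,2), of "axis j 1" "axis i 1"]
    by (simp add: inner_axis_matrix_axis)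
  with assms(3) show ?thesis by simp
qed

text \<open>One elimination step of a Cholesky factorisation: \<open>R - w w\<^sup>T\<close> is the Schur
  complement of the pivot \<open>R\<^sub>i\<^sub>i\<close>.\<close>

lemma psd_minus_outer_column:
  fixes R :: "real^'n^'n"
  assumes sym: "transpose R = R" and psd: "psd R" and pivot: "R$i$i \<noteq> 0"
  defines "w \<equiv> (1 / sqrt (R$i$i)) *\<^sub>R (R *v axis i 1)"
  shows "transpose (R - outer w w) = R - outer w w" and "psd (R - outer w w)"
    and "{j. (R - outer w w)$j$j \<noteq> 0} \<subset> {j. R$j$j \<noteq> 0}"
proof -
  define d where "d = R$i$i"
  have d: "d > 0" using psd_diag_nonneg[OF psd, of i] pivot by (simp add: d_def)
  have entry: "(R - outer w w)$j$k = R$j$k - R$j$i * R$k$i / d" for j k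
    using d by (simp add: w_def outer_nth matrix_vector_mult_basis column_def d_def real_sqrt_mult[symmetric])
  show "transpose (R - outer w w) = R - outer w w"
    using sym unfolding symmetric_matrix_iff entry by (metis mult.commute)
  show "psd (R - outer w w)" unfolding psd_def
  proof
    fix v
    define p where "p = v \<bullet> (R *v axis i 1)"
    have "v \<bullet> ((R - outer w w) *v v) = v \<bullet> (R *v v) - (w \<bullet> v) * (v \<bullet> w)"
      by (simp add: matrix_vector_mult_diff_rdistrib outer_mult_vector inner_diff_right)
    also have "\<dots> = v \<bullet> (R *v v) - p^2 / d"
      using d by (simp add: w_def p_def d_def inner_commute power2_eq_square)
    finally have eq: "v \<bullet> ((R - outer w w) *v v) = v \<bullet> (R *v v) - p^2 / d" .
    have "p^2 \<le> (v \<bullet> (R *v v)) * d"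
      using psd_Cauchy_Schwarz[OF sym psd, of v "axis i 1"]
      by (simp add: p_def d_def inner_axis_matrix_axis)
    with d eq show "0 \<le> v \<bullet> ((R - outer w w) *v v)" by (simp add: divide_le_eq)
  qed
  have "R$j$j = 0 \<Longrightarrow> (R - outer w w)$j$j = 0" for j
    unfolding entry using psd_zero_diag_imp_zero[OF sym psd] by simp
  moreover have "(R - outer w w)$i$i = 0"
    unfolding entry using d by (simp add: d_def)
  ultimately show "{j. (R - outer w w)$j$j \<noteq> 0} \<subset> {j. R$j$j \<noteq> 0}"
    using pivot by blast
qed

lemma psd_eq_sum_list_outer:
  fixes R :: "real^'n^'n"
  assumes "transpose R = R" "psd R"
  shows "\<exists>ws. R = sum_list (map (\<lambda>w. outer w w) ws)"
  using assms
proof (induction "card {j. R$j$j \<noteq> 0}" arbitrary: R rule: less_induct)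
  case less
  show ?case
  proof (cases "\<exists>i. R$i$i \<noteq> 0")
    case False
    then have "R = 0"
      using psd_zero_diag_imp_zero[OF less.prems] by (simp add: vec_eq_iff)
    then show ?thesis by (intro exI[of _ "[]"]) simp
  next
    case True
    then obtain i where pivot: "R$i$i \<noteq> 0" by blast
    define w where "w = (1 / sqrt (R$i$i)) *\<^sub>R (R *v axis i 1)"
    note step = psd_minus_outer_column[OF less.prems pivot, folded w_def]
    have "card {j. (R - outer w w)$j$j \<noteq> 0} < card {j. R$j$j \<noteq> 0}"
      by (rule psubset_card_mono[OF _ step(3)]) simp
    then obtain ws where "R - outer w w = sum_list (map (\<lambda>w. outer w w) ws)"
      using less.hyps step(1,2) by blast
    then have "R = sum_list (map (\<lambda>w. outer w w) (w # ws))" by (simp add: algebra_simps)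
    then show ?thesis by blast
  qed
qed

section \<open>The BFGS update relative to a well-conditioned Hessian\<close>

lemma BFGS_sym_eq:
  assumes "transpose G = G" "transpose A = A"
  shows "BFGS A G u = G - (1 / (u \<bullet> (G *v u))) *\<^sub>R outer (G *v u) (G *v u)
                        + (1 / (u \<bullet> (A *v u))) *\<^sub>R outer (A *v u) (A *v u)"
  using assms by (metis BFGS_def transpose_matrix_vector)

lemma BFGS_zero: "BFGS A G 0 = G"
  by (simp add: BFGS_def)

lemma theta_zero: "theta A G 0 = 0"
  by (simp add: theta_def)

lemma rank_two_update_nonneg:
  fixes s p q r c :: real
  assumes "c > 0" "r \<ge> 0" "p^2 \<le> s*r" "s \<ge> 0"
  shows "0 \<le> s - (p+q)^2/(r+c) + q^2/c"
proof (cases "r = 0")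
  case True
  with assms show ?thesis by simp
next
  case False
  with assms(2) have r: "r > 0" by simp
  have "p^2/r \<le> s" using assms r by (simp add: divide_le_eq mult.commute)
  moreover have "p^2/r + q^2/c - (p+q)^2/(r+c) = (p*c - q*r)^2/(r*c*(r+c))"
    using r assms(1) by (simp add: field_simps power2_eq_square)
  moreover have "0 \<le> (p*c - q*r)^2/(r*c*(r+c))" using r assms(1) by simp
  ultimately show ?thesis by linarith
qed

locale bounded_spd =
  fixes A :: "real^'n^'n" and \<mu> L :: real
  assumes mu_pos: "0 < \<mu>" and mu_le_L: "\<mu> \<le> L"
    and A_sym: "transpose A = A"
    and A_bounds: "\<forall>v. \<mu> * (v \<bullet> v) \<le> v \<bullet> (A *v v) \<and> v \<bullet> (A *v v) \<le> L * (v \<bullet> v)"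
begin

abbreviation "Ainv \<equiv> matrix_inv A"

lemma A_lower: "\<mu> * (v \<bullet> v) \<le> v \<bullet> (A *v v)"
  using A_bounds by blast

lemma A_upper: "v \<bullet> (A *v v) \<le> L * (v \<bullet> v)"
  using A_bounds by blast

lemma inner_A_pos: "u \<noteq> 0 \<Longrightarrow> 0 < u \<bullet> (A *v u)"
  using A_lower[of u] mu_pos by (smt (verit) inner_gt_zero_iff mult_pos_pos)

lemma A_inverse: "A ** Ainv = mat 1 \<and> Ainv ** A = mat 1"
proof -
  have "\<forall>x. A *v x = 0 \<longrightarrow> x = 0"
    using inner_A_pos by fastforce
  then have "invertible A"
    using matrix_left_invertible_ker invertible_left_inverse by blast
  then show ?thesis unfolding matrix_inv_def invertible_def by (rule someI_ex)
qed

lemma A_Ainv_vector [simp]: "A *v (Ainv *v y) = y"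
  and Ainv_A_vector [simp]: "Ainv *v (A *v y) = y"
  using A_inverse by (simp_all add: matrix_vector_mul_assoc)

lemma Ainv_sym: "transpose Ainv = Ainv"
proof -
  have "transpose Ainv = (transpose Ainv ** transpose A) ** Ainv"
    using A_inverse A_sym by (simp add: matrix_mul_assoc[symmetric])
  also have "transpose Ainv ** transpose A = mat 1"
    using A_inverse by (simp add: matrix_transpose_mul[symmetric] transpose_mat)
  finally show ?thesis by simp
qed

lemma Ainv_lower: "\<mu> * ((Ainv *v y) \<bullet> (Ainv *v y)) \<le> y \<bullet> (Ainv *v y)"
  using A_lower[of "Ainv *v y"] by (simp add: inner_commute)

lemma Ainv_nonneg: "0 \<le> y \<bullet> (Ainv *v y)"
  using Ainv_lower[of y] mu_pos by (smt (verit) inner_ge_zero mult_nonneg_nonneg)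

lemma Ainv_psd: "psd Ainv"
  using Ainv_nonneg psd_def by blast

lemma Ainv_upper: "\<mu> * (y \<bullet> (Ainv *v y)) \<le> y \<bullet> y"
proof -
  define z where "z = Ainv *v y"
  have q: "y \<bullet> (Ainv *v y) = z \<bullet> y" by (simp add: z_def inner_commute)
  have "\<mu> * (norm z)^2 \<le> norm z * norm y"
    using Ainv_lower[of y] norm_cauchy_schwarz[of z y] q
    by (simp add: z_def dot_square_norm)
  then have zy: "\<mu> * norm z \<le> norm y"
    by (cases "norm z = 0") (auto simp: power2_eq_square mult_ac)
  have "\<mu> * (z \<bullet> y) \<le> (\<mu> * norm z) * norm y"
    using norm_cauchy_schwarz[of z y] mu_pos by simp
  also have "\<dots> \<le> norm y * norm y" using zy by (simp add: mult_right_mono)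
  finally show ?thesis using q by (simp add: dot_square_norm power2_eq_square)
qed

lemma sigma_eq_trace: "sigma A G = trace (Ainv ** (G - A))"
  using A_inverse by (simp add: sigma_def matrix_diff_ldistrib trace_sub trace_I)

lemma sigma_bounds:
  assumes "transpose G = G" "psd (G - A)"
  shows "0 \<le> sigma A G" and "\<mu> * sigma A G \<le> trace G - trace A"
proof -
  have "transpose (G - A) = G - A"
    using assms(1) A_sym by (simp add: symmetric_matrix_iff)
  then obtain ws where ws: "G - A = sum_list (map (\<lambda>w. outer w w) ws)"
    using psd_eq_sum_list_outer assms(2) by blast
  have \<sigma>: "sigma A G = (\<Sum>w\<leftarrow>ws. (Ainv *v w) \<bullet> w)"
    by (simp add: sigma_eq_trace ws trace_matrix_mult_sum_list_outer)
  have tr: "trace G - trace A = (\<Sum>w\<leftarrow>ws. w \<bullet> w)"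
    using trace_matrix_mult_sum_list_outer[of "mat 1" ws] by (simp add: ws trace_sub[symmetric])
  show "0 \<le> sigma A G"
    unfolding \<sigma> by (rule sum_list_nonneg) (auto simp: inner_commute Ainv_nonneg)
  have "\<mu> * sigma A G = (\<Sum>w\<leftarrow>ws. \<mu> * ((Ainv *v w) \<bullet> w))"
    by (simp add: \<sigma> sum_list_const_mult)
  also have "\<dots> \<le> (\<Sum>w\<leftarrow>ws. w \<bullet> w)"
    by (rule sum_list_mono) (metis Ainv_upper inner_commute)
  finally show "\<mu> * sigma A G \<le> trace G - trace A" by (simp add: tr)
qed

lemma BFGS_sym:
  assumes "transpose G = G"
  shows "transpose (BFGS A G u) = BFGS A G u"
  using assms unfolding BFGS_sym_eq[OF assms A_sym] symmetric_matrix_iff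
  by (simp add: outer_nth mult.commute)

lemma BFGS_psd:
  assumes sG: "transpose G = G" and pG: "psd (G - A)"
  shows "psd (BFGS A G u - A)"
proof (cases "u = 0")
  case True
  with pG show ?thesis by (simp add: BFGS_zero)
next
  case False
  define R where "R = G - A"
  have sR: "transpose R = R" using sG A_sym by (simp add: R_def symmetric_matrix_iff)
  have pR: "psd R" using pG R_def by simp
  define c where "c = u \<bullet> (A *v u)"
  define r where "r = u \<bullet> (R *v u)"
  have c: "c > 0" using inner_A_pos[OF False] c_def by simp
  have r: "r \<ge> 0" using pR psd_def r_def by blast
  have g: "u \<bullet> (G *v u) = r + c"
    by (simp add: r_def c_def R_def matrix_vector_mult_diff_rdistrib inner_diff_right)
  show ?thesis unfolding psd_def
  proof
    fix v
    define p where "p = v \<bullet> (R *v u)"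
    define q where "q = v \<bullet> (A *v u)"
    define s where "s = v \<bullet> (R *v v)"
    have s: "s \<ge> 0" using pR psd_def s_def by blast
    have cs: "p^2 \<le> s*r" using psd_Cauchy_Schwarz[OF sR pR, of v u] by (simp add: p_def s_def r_def)
    have vGu: "v \<bullet> (G *v u) = p + q"
      by (simp add: p_def q_def R_def matrix_vector_mult_diff_rdistrib inner_diff_right)
    have "v \<bullet> ((BFGS A G u - A) *v v) = s - (1/(r+c)) * ((G *v u) \<bullet> v) * (v \<bullet> (G *v u))
        + (1/c) * ((A *v u) \<bullet> v) * (v \<bullet> (A *v u))"
      unfolding BFGS_sym_eq[OF sG A_sym]
      by (simp add: matrix_vector_mult_diff_rdistrib matrix_vector_mult_add_rdistrib
          scaleR_matrix_vector_assoc[symmetric] outer_mult_vector inner_diff_right inner_add_right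
          s_def R_def g c_def[symmetric] algebra_simps)
    also have "\<dots> = s - (p+q)^2/(r+c) + q^2/c"
      by (simp add: inner_commute vGu q_def power2_eq_square)
    finally show "0 \<le> v \<bullet> ((BFGS A G u - A) *v v)"
      using rank_two_update_nonneg[OF c r cs s] by simp
  qed
qed

lemma sigma_BFGS:
  assumes sG: "transpose G = G" and u: "u \<noteq> 0"
  shows "sigma A (BFGS A G u) = sigma A G - ((G *v u) \<bullet> (Ainv *v (G *v u))) / (u \<bullet> (G *v u)) + 1"
  using inner_A_pos[OF u]
  by (simp add: sigma_def BFGS_sym_eq[OF sG A_sym] matrix_add_ldistrib matrix_diff_ldistrib
      matrix_scalar_ac scalar_matrix_assoc[symmetric] trace_add trace_sub trace_scaleR
      trace_matrix_mult_outer inner_commute)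

lemma BFGS_quantities:
  assumes sG: "transpose G = G" and pG: "psd (G - A)" and u: "u \<noteq> 0"
  defines "a \<equiv> (G *v u) \<bullet> (Ainv *v (G *v u))" and "g \<equiv> u \<bullet> (G *v u)" and "c \<equiv> u \<bullet> (A *v u)"
  shows "0 < c" and "c \<le> g" and "g^2 \<le> a * c"
    and "(G *v u) \<bullet> (Ainv *v (A *v u)) = g" and "(A *v u) \<bullet> (Ainv *v (G *v u)) = g"
    and "(A *v u) \<bullet> (Ainv *v (A *v u)) = c"
proof -
  show "0 < c" using inner_A_pos[OF u] by (simp add: c_def)
  show "c \<le> g" using pG unfolding psd_def c_def g_def
    by (metis diff_ge_0_iff_ge inner_diff_right matrix_vector_mult_diff_rdistrib)
  show GA: "(G *v u) \<bullet> (Ainv *v (A *v u)) = g"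
    using inner_matrix_sym[OF sG, of u u] by (simp add: g_def inner_commute)
  show "(A *v u) \<bullet> (Ainv *v (G *v u)) = g"
    using inner_matrix_sym[OF Ainv_sym, of "A *v u" "G *v u"] by (simp add: g_def)
  show AA: "(A *v u) \<bullet> (Ainv *v (A *v u)) = c"
    by (simp add: c_def inner_commute)
  show "g^2 \<le> a * c"
    using psd_Cauchy_Schwarz[OF Ainv_sym Ainv_psd, of "G *v u" "A *v u"]
    by (simp add: a_def g_def c_def inner_commute)
qed

lemma sigma_BFGS_le_theta:
  assumes sG: "transpose G = G" and pG: "psd (G - A)"
  shows "sigma A (BFGS A G u) \<le> sigma A G - (theta A G u)^2"
proof (cases "u = 0")
  case True
  then show ?thesis by (simp add: theta_zero BFGS_zero)
next
  case False
  define a where "a = (G *v u) \<bullet> (Ainv *v (G *v u))"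
  define g where "g = u \<bullet> (G *v u)"
  define c where "c = u \<bullet> (A *v u)"
  note q = BFGS_quantities[OF sG pG False, folded a_def g_def c_def]
  have sR: "transpose (G - A) = G - A" using sG A_sym by (simp add: symmetric_matrix_iff)
  have quad: "((G - A) *v u) \<bullet> (Ainv *v ((G - A) *v u)) = a - 2*g + c"
    unfolding matrix_vector_mult_diff_rdistrib matrix_vector_mult_diff_distrib inner_diff_left
      inner_diff_right q(4-6) a_def[symmetric] by simp
  have num: "u \<bullet> (((G - A) ** Ainv ** (G - A)) *v u) = a - 2*g + c"
    by (simp only: matrix_vector_mul_assoc[symmetric] inner_matrix_sym[OF sR] quad)
  have den: "u \<bullet> ((G ** Ainv ** G) *v u) = a"
    by (simp only: matrix_vector_mul_assoc[symmetric] inner_matrix_sym[OF sG] a_def)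
  have "0 \<le> a - 2*g + c" using Ainv_nonneg[of "(G - A) *v u"] quad by simp
  moreover have "0 \<le> a" using Ainv_nonneg a_def by simp
  ultimately have theta: "(theta A G u)^2 = (a - 2*g + c) / a"
    by (simp add: theta_def num den)
  have g: "0 < g" using q(1,2) by linarith
  have a: "0 < a" using q(1,3) g by (smt (verit) mult_nonpos_nonneg zero_less_power)
  have "c * g \<le> g * g" using q(2) g by (simp add: mult_right_mono)
  then have "0 \<le> (a - g)^2 + g * g - c * g" by (simp add: add_increasing)
  then have "(a - 2*g + c) / a \<le> a/g - 1"
    using a g by (simp add: field_simps power2_eq_square)
  then show ?thesis
    by (simp add: sigma_BFGS[OF sG False] theta a_def g_def)
qed

lemma sigma_BFGS_greedy:
  assumes sG: "transpose G = G" and pG: "psd (G - A)" and greedy: "is_greedy A G u"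
  shows "sigma A (BFGS A G u) \<le> (1 - \<mu> / (real CARD('n) * L)) * sigma A G"
proof -
  obtain i where u: "u = axis i 1" and best: "\<And>j. G$j$j / A$j$j \<le> G$i$i / A$i$i"
    using greedy unfolding is_greedy_def inner_axis_matrix_axis by blast
  have u0: "u \<noteq> 0" using u by simp
  define a where "a = (G *v u) \<bullet> (Ainv *v (G *v u))"
  define g where "g = u \<bullet> (G *v u)"
  define c where "c = u \<bullet> (A *v u)"
  define d where "d = real CARD('n)"
  note q = BFGS_quantities[OF sG pG u0, folded a_def g_def c_def]
  have g_eq: "g = G$i$i" and c_eq: "c = A$i$i"
    by (simp_all add: g_def c_def u inner_axis_matrix_axis)
  have c: "0 < c" and g: "0 < g" using q(1,2) by linarith+
  have Ajj: "\<mu> \<le> A$j$j" "A$j$j \<le> L" for j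
    using A_lower[of "axis j 1"] A_upper[of "axis j 1"]
    by (simp_all add: inner_axis_matrix_axis inner_axis_axis)
  have "G$j$j \<le> (g/c) * A$j$j" for j
  proof -
    have "0 < A$j$j" using Ajj(1)[of j] mu_pos by linarith
    then show ?thesis using best[of j] by (simp add: g_eq c_eq pos_divide_le_eq)
  qed
  then have trG: "trace G \<le> (g/c) * trace A"
    unfolding trace_def sum_distrib_left by (rule sum_mono)
  have trA: "trace A \<le> d * L"
    unfolding trace_def d_def using sum_bounded_above[of UNIV "\<lambda>j. A$j$j" L] Ajj(2) by simp
  have dL: "0 < d * L" using mu_pos mu_le_L by (simp add: d_def)
  have gc_ag: "g/c \<le> a/g" using q(3) c g by (simp add: field_simps power2_eq_square)
  have "\<mu> * sigma A G \<le> (g/c - 1) * trace A"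
    using sigma_bounds(2)[OF sG pG] trG by (simp add: algebra_simps)
  also have "\<dots> \<le> (g/c - 1) * (d * L)"
    using q(2) c trA by (intro mult_left_mono) auto
  also have "\<dots> \<le> (a/g - 1) * (d * L)"
    using gc_ag dL by (intro mult_right_mono) auto
  finally have "\<mu> / (d * L) * sigma A G \<le> a/g - 1"
    using dL by (simp add: pos_divide_le_eq)
  then show ?thesis
    by (simp add: sigma_BFGS[OF sG u0] a_def[symmetric] g_def[symmetric] d_def[symmetric]
        left_diff_distrib)
qed


lemma contraction_factor_nonneg: "0 \<le> 1 - \<mu> / (real CARD('n) * L)"
proof -
  have "1 \<le> real CARD('n)"
    using zero_less_card_finite[where 'a='n] by linarith
  then have "L \<le> real CARD('n) * L"
    using mult_right_mono[of 1 "real CARD('n)" L] mu_pos mu_le_L by simp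
  with mu_le_L have "\<mu> \<le> real CARD('n) * L" by linarith
  with mu_pos show ?thesis by (simp add: divide_le_eq)
qed

lemma psd_scaled_identity_minus: "psd (L *\<^sub>R mat 1 - A)"
  using A_upper by (simp add: psd_def matrix_vector_mult_diff_rdistrib
      scaleR_matrix_vector_assoc[symmetric] inner_diff_right)

lemma theta_sq_le_sigma:
  assumes sG: "transpose G = G" and pG: "psd (G - A)"
  shows "(theta A G u)^2 \<le> sigma A G"
  using sigma_BFGS_le_theta[OF assms, of u]
    sigma_bounds(1)[OF BFGS_sym[OF sG] BFGS_psd[OF sG pG, of u]]
  by linarith

lemma sharpened_BFGS_step:
  assumes sG: "transpose G = G" and pG: "psd (G - A)" and greedy: "is_greedy A (BFGS A G s) u"
  shows "sigma A (BFGS A (BFGS A G s) u)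
           \<le> (1 - \<mu> / (real CARD('n) * L)) * (sigma A G - (theta A G s)^2)"
  using sigma_BFGS_greedy[OF BFGS_sym[OF sG] BFGS_psd[OF sG pG] greedy]
    mult_left_mono[OF sigma_BFGS_le_theta[OF sG pG, of s] contraction_factor_nonneg]
  by linarith
end

section \<open>Unrolling the contraction\<close>

text \<open>For \<open>\<rho> = 0\<close> only the term \<open>i = 0\<close> survives, since \<open>0 ^ 0 = 1\<close> and \<open>x / 0 = 0\<close>;
  this is where \<open>a t \<le> s t\<close> is needed.\<close>

lemma weighted_sum_le_of_contraction:
  fixes s a :: "nat \<Rightarrow> real"
  assumes \<rho>: "0 \<le> \<rho>" and s_nonneg: "\<And>t. 0 \<le> s t" and a_le: "\<And>t. a t \<le> s t"
    and contr: "\<And>t. s (Suc t) \<le> \<rho> * (s t - a t)"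
  shows "(\<Sum>i<t. a i / \<rho> ^ i) \<le> s 0"
proof (cases "\<rho> = 0")
  case True
  have "(\<Sum>i<t. a i / \<rho> ^ i) = (\<Sum>i<t. if i = 0 then a 0 else 0)"
    by (rule sum.cong) (auto simp: True)
  also have "\<dots> \<le> s 0" using a_le[of 0] s_nonneg[of 0] by (cases t) auto
  finally show ?thesis .
next
  case False
  with \<rho> have \<rho>_pos: "0 < \<rho>" by simp
  have "(\<Sum>i<n. a i / \<rho> ^ i) + s n / \<rho> ^ n \<le> s 0" for n
  proof (induction n)
    case (Suc n)
    have "s (Suc n) / \<rho> ^ Suc n \<le> \<rho> * (s n - a n) / \<rho> ^ Suc n"
      by (rule divide_right_mono[OF contr]) (use \<rho>_pos in simp)
    also have "\<dots> = s n / \<rho> ^ n - a n / \<rho> ^ n"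
      using \<rho>_pos by (simp add: diff_divide_distrib)
    finally show ?case using Suc.IH by simp
  qed simp
  moreover have "0 \<le> s t / \<rho> ^ t" using s_nonneg[of t] \<rho>_pos by simp
  ultimately show ?thesis by (smt (verit))
qed

theorem lemma4:
  fixes A :: "real^'n^'n" and b :: "real^'n" and \<mu> L :: real
    and x :: "nat \<Rightarrow> real^'n" and G Gbar :: "nat \<Rightarrow> real^'n^'n"
    and ubar :: "nat \<Rightarrow> real^'n"
  assumes mu_pos: "0 < \<mu>" and mu_le_L: "\<mu> \<le> L"
    and A_sym: "transpose A = A"
    and A_bounds: "\<forall>v. \<mu> * (v \<bullet> v) \<le> v \<bullet> (A *v v) \<and> v \<bullet> (A *v v) \<le> L * (v \<bullet> v)"
    and G0: "G 0 = L *\<^sub>R mat 1"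
    and x_step: "\<forall>t. x (Suc t) = x t - matrix_inv (G t) *v grad (quad_f A b) (x t)"
    and Gbar_def: "\<forall>t. Gbar t = BFGS A (G t) (x (Suc t) - x t)"
    and ubar_greedy: "\<forall>t. is_greedy A (Gbar t) (ubar t)"
    and G_step: "\<forall>t. G (Suc t) = BFGS A (Gbar t) (ubar t)"
  shows "(\<forall>t. (\<forall>i\<le>t. grad (quad_f A b) (x i) \<noteq> 0) \<longrightarrow>
            sigma A (G (Suc t)) \<le> (1 - \<mu> / (real CARD('n) * L)) *
              (sigma A (G t) - (theta A (G t) (x (Suc t) - x t))\<^sup>2)) \<and>
         (\<forall>t\<ge>1. (\<forall>i<t. grad (quad_f A b) (x i) \<noteq> 0) \<longrightarrow>
            (\<Sum>i<t. (theta A (G i) (x (Suc i) - x i))\<^sup>2 / (1 - \<mu> / (real CARD('n) * L)) ^ i)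
              \<le> sigma A (G 0))"
proof -
  interpret bounded_spd A \<mu> L
    using mu_pos mu_le_L A_sym A_bounds by unfold_locales
  define \<rho> where "\<rho> = 1 - \<mu> / (real CARD('n) * L)"
  define \<theta>sq where "\<theta>sq t = (theta A (G t) (x (Suc t) - x t))\<^sup>2" for t
  have G_dominates: "transpose (G t) = G t \<and> psd (G t - A)" for t
  proof (induction t)
    case 0
    show ?case
      using psd_scaled_identity_minus by (simp add: G0 symmetric_matrix_iff mat_def)
  qed (simp add: G_step Gbar_def BFGS_sym BFGS_psd)
  have contr: "sigma A (G (Suc t)) \<le> \<rho> * (sigma A (G t) - \<theta>sq t)" for t
    using sharpened_BFGS_step G_dominates ubar_greedy by (simp add: G_step Gbar_def \<rho>_def \<theta>sq_def)
  have "\<theta>sq t \<le> sigma A (G t)" for t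
    using theta_sq_le_sigma G_dominates by (simp add: \<theta>sq_def)
  then have "(\<Sum>i<t. \<theta>sq i / \<rho> ^ i) \<le> sigma A (G 0)" for t
    using contraction_factor_nonneg sigma_bounds(1) G_dominates contr unfolding \<rho>_def
    by (intro weighted_sum_le_of_contraction[where s="\<lambda>t. sigma A (G t)"]) auto
  with contr show ?thesis unfolding \<rho>_def \<theta>sq_def by blast
qed

end
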